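(* Let $q \ge 2$ and for $i = 1,\dots,q$ let $\Sigma_i \subset \mathbb{R}^{N_i}$ be nonempty; let $\Sigma = \Sigma_1 \times \cdots \times \Sigma_q$, equipped with the norm $\|(x_1,\dots,x_q)\|_2 = \sqrt{\sum_i \|x_i\|_2^2}$. For each $i$ let $P_i$ be a generalized projection onto $\Sigma_i$ minimizing $\beta_{\Sigma_i}$ over all generalized projections onto $\Sigma_i$, with $\beta_{\Sigma_i}(P_i) < \infty$. Define $P_\Sigma(z) = (P_1(z_1),\dots,P_q(z_q))$ (i.e., the set $P_1(z_1)\times\cdots\times P_q(z_q)$). Then $P_\Sigma$ minimizes $\beta_\Sigma$ over all generalized projections onto $\Sigma$.
   Context: A (set-valued) generalized projection onto $\Sigma \subset \mathbb{R}^N$ is a map $P$ assigning to each $z \in \mathbb{R}^N$ a nonempty subset $P(z) \subset \Sigma$. Restricted Lipschitz property: $P$ has the restricted $\beta$-Lipschitz property with respect to $\Sigma$ if for all $z \in \mathbb{R}^N$, all $x \in \Sigma$ and all $u \in P(z)$, $\|u - x\|_2 \le \beta\|z - x\|_2$; $\beta_\Sigma(P)$ denotes the smallest such $\beta$ (possibly $+\infty$). *)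

theory Defs
  imports Main "HOL-Library.Extended_Real"
begin

text \<open>Points of R^n are represented as real lists of length n.
  The ambient space of a set is given as a carrier V with a distance d.\<close>

definition rn :: "nat \<Rightarrow> real list set" where
  "rn n = {xs. length xs = n}"

definition euclid_dist :: "real list \<Rightarrow> real list \<Rightarrow> real" where
  "euclid_dist xs ys = sqrt (\<Sum>j<length xs. (xs ! j - ys ! j)\<^sup>2)"

definition gen_proj :: "'a set \<Rightarrow> 'a set \<Rightarrow> ('a \<Rightarrow> 'a set) \<Rightarrow> bool" where
  "gen_proj V S P \<longleftrightarrow> (\<forall>z\<in>V. P z \<noteq> {} \<and> P z \<subseteq> S)"

definition restricted_lipschitz ::
  "'a set \<Rightarrow> ('a \<Rightarrow> 'a \<Rightarrow> real) \<Rightarrow> 'a set \<Rightarrow> ('a \<Rightarrow> 'a set) \<Rightarrow> real \<Rightarrow> bool" where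
  "restricted_lipschitz V d S P \<beta> \<longleftrightarrow>
     (\<forall>z\<in>V. \<forall>x\<in>S. \<forall>u\<in>P z. d u x \<le> \<beta> * d z x)"

text \<open>Smallest restricted Lipschitz constant (infinity if none exists).\<close>
definition beta_const ::
  "'a set \<Rightarrow> ('a \<Rightarrow> 'a \<Rightarrow> real) \<Rightarrow> 'a set \<Rightarrow> ('a \<Rightarrow> 'a set) \<Rightarrow> ereal" where
  "beta_const V d S P = Inf {ereal \<beta> | \<beta>. restricted_lipschitz V d S P \<beta>}"

text \<open>Product space R^{N_0} x ... x R^{N_(q-1)} as lists of q component vectors.\<close>
definition prod_space :: "nat \<Rightarrow> (nat \<Rightarrow> nat) \<Rightarrow> real list list set" where
  "prod_space q N = {zs. length zs = q \<and> (\<forall>i<q. zs ! i \<in> rn (N i))}"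

definition prod_dist :: "nat \<Rightarrow> real list list \<Rightarrow> real list list \<Rightarrow> real" where
  "prod_dist q xs ys = sqrt (\<Sum>i<q. (euclid_dist (xs ! i) (ys ! i))\<^sup>2)"

definition prod_set :: "nat \<Rightarrow> (nat \<Rightarrow> nat) \<Rightarrow> (nat \<Rightarrow> real list set) \<Rightarrow> real list list set" where
  "prod_set q N S = {xs \<in> prod_space q N. \<forall>i<q. xs ! i \<in> S i}"

definition prod_proj ::
  "nat \<Rightarrow> (nat \<Rightarrow> real list \<Rightarrow> real list set) \<Rightarrow> real list list \<Rightarrow> real list list set" where
  "prod_proj q P zs = {us. length us = q \<and> (\<forall>i<q. us ! i \<in> P i (zs ! i))}"

end

theory Submission
  imports Defs "HOL-Analysis.L2_Norm"
begin

text \<open>The constant of the product projection is at most the largest constant of its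
  factors, since the product distance is the \<open>\<ell>\<^sup>2\<close>-combination of the factor distances.
  Conversely, any generalized projection \<open>P'\<close> onto the product yields one onto each factor:
  freeze all other coordinates at a point of the product set, apply \<open>P'\<close> and read off the
  \<open>i\<close>-th coordinate. This factor projection inherits every Lipschitz constant of \<open>P'\<close>,
  so by optimality of \<open>P\<^sub>i\<close> every constant of \<open>P'\<close> bounds \<open>\<beta>(P\<^sub>i)\<close> for all \<open>i\<close>, and hence
  \<open>\<beta>\<close> of the product projection.\<close>

lemma restricted_lipschitz_mono:
  assumes "restricted_lipschitz V d S P b" "b \<le> c" "\<And>x y. 0 \<le> d x y"
  shows "restricted_lipschitz V d S P c"
  using assms unfolding restricted_lipschitz_def by (meson mult_right_mono order_trans)

lemma beta_const_le_ereal: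
  "restricted_lipschitz V d S P b \<Longrightarrow> beta_const V d S P \<le> ereal b"
  unfolding beta_const_def by (rule Inf_lower) blast

lemma restricted_lipschitz_if_beta_const_less:
  assumes "beta_const V d S P < ereal c" "\<And>x y. 0 \<le> d x y"
  shows "restricted_lipschitz V d S P c"
proof -
  obtain b where "restricted_lipschitz V d S P b" "b < c"
    using assms(1) unfolding beta_const_def Inf_less_iff by auto
  then show ?thesis using restricted_lipschitz_mono assms(2) by fastforce
qed

lemma beta_const_leI:
  assumes "\<And>b c. restricted_lipschitz V d S P' b \<Longrightarrow> b < c \<Longrightarrow> restricted_lipschitz V' d' S' P c"
  shows "beta_const V' d' S' P \<le> beta_const V d S P'"
  unfolding beta_const_def[of V d S P']
proof (rule Inf_greatest, clarify)
  fix b assume "restricted_lipschitz V d S P' b"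
  then have "beta_const V' d' S' P \<le> ereal b + ereal e" if "0 < e" for e
    using assms[of b "b + e"] that beta_const_le_ereal by fastforce
  then show "beta_const V' d' S' P \<le> ereal b"
    by (rule ereal_le_epsilon2)
qed

lemma L2_set_le_scaled:
  assumes "\<And>i. i \<in> A \<Longrightarrow> 0 \<le> f i \<and> 0 \<le> g i \<and> f i \<le> c * g i"
  shows "L2_set f A \<le> c * L2_set g A"
proof (cases "c \<ge> 0")
  case True
  then have "L2_set f A \<le> L2_set (\<lambda>i. c * g i) A"
    using assms by (intro L2_set_mono) auto
  with True show ?thesis by (simp add: L2_set_right_distrib)
next
  case False
  have "f i = 0 \<and> g i = 0" if "i \<in> A" for i
  proof -
    have "0 \<le> f i" "0 \<le> g i" "f i \<le> c * g i" using assms[OF that] by auto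
    moreover have "c * g i \<le> 0" using False \<open>0 \<le> g i\<close> by (simp add: mult_nonpos_nonneg)
    ultimately show ?thesis using False by (smt (verit) mult_neg_pos)
  qed
  then show ?thesis by (simp add: L2_set_0')
qed

lemma euclid_dist_nonneg: "0 \<le> euclid_dist x y"
  unfolding euclid_dist_def by (simp add: sum_nonneg)

lemma euclid_dist_self: "euclid_dist x x = 0"
  unfolding euclid_dist_def by simp

lemma prod_dist_eq_L2_set: "prod_dist q x y = L2_set (\<lambda>i. euclid_dist (x ! i) (y ! i)) {..<q}"
  unfolding prod_dist_def L2_set_def ..

lemma ex_list_nth_mem:
  assumes "\<And>i. i < q \<Longrightarrow> A i \<noteq> {}"
  shows "\<exists>xs. length xs = q \<and> (\<forall>i<q. xs ! i \<in> A i)"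
proof (intro exI conjI allI impI)
  show "length (map (\<lambda>i. SOME x. x \<in> A i) [0..<q]) = q" by simp
  show "map (\<lambda>i. SOME x. x \<in> A i) [0..<q] ! i \<in> A i" if "i < q" for i
    using assms[OF that] that by (simp add: some_in_eq)
qed

lemma prod_proj_gen_proj:
  assumes "\<And>i. i < q \<Longrightarrow> S i \<subseteq> rn (N i)"
    and "\<And>i. i < q \<Longrightarrow> gen_proj (rn (N i)) (S i) (P i)"
  shows "gen_proj (prod_space q N) (prod_set q N S) (prod_proj q P)"
  unfolding gen_proj_def
proof (intro ballI conjI)
  fix z assume z: "z \<in> prod_space q N"
  then have P_z: "P i (z ! i) \<noteq> {} \<and> P i (z ! i) \<subseteq> S i" if "i < q" for i
    using assms(2)[OF that] that unfolding gen_proj_def prod_space_def by auto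
  then show "prod_proj q P z \<noteq> {}"
    using ex_list_nth_mem[of q "\<lambda>i. P i (z ! i)"] unfolding prod_proj_def by auto
  show "prod_proj q P z \<subseteq> prod_set q N S"
    using P_z assms(1) unfolding prod_proj_def prod_set_def prod_space_def by blast
qed

lemma prod_proj_restricted_lipschitz:
  assumes "\<And>i. i < q \<Longrightarrow> restricted_lipschitz (rn (N i)) euclid_dist (S i) (P i) c"
  shows "restricted_lipschitz (prod_space q N) (prod_dist q) (prod_set q N S) (prod_proj q P) c"
  unfolding restricted_lipschitz_def prod_dist_eq_L2_set
proof (intro ballI L2_set_le_scaled conjI euclid_dist_nonneg)
  fix z x u i
  assume "z \<in> prod_space q N" "x \<in> prod_set q N S" "u \<in> prod_proj q P z" "i \<in> {..<q}"
  then show "euclid_dist (u ! i) (x ! i) \<le> c * euclid_dist (z ! i) (x ! i)"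
    using assms unfolding restricted_lipschitz_def prod_space_def prod_set_def prod_proj_def
    by auto
qed

lemma list_update_in_prod_space:
  "x \<in> prod_space q N \<Longrightarrow> w \<in> rn (N i) \<Longrightarrow> x[i := w] \<in> prod_space q N"
  unfolding prod_space_def by (cases "i < length x") (auto simp: nth_list_update list_update_beyond)

lemma list_update_in_prod_set:
  "x \<in> prod_set q N S \<Longrightarrow> w \<in> S i \<Longrightarrow> w \<in> rn (N i) \<Longrightarrow> x[i := w] \<in> prod_set q N S"
  unfolding prod_set_def by (cases "i < length x") (auto simp: list_update_in_prod_space nth_list_update list_update_beyond)

lemma prod_dist_list_update:
  assumes "length x = q" "i < q"
  shows "prod_dist q (x[i := w]) (x[i := v]) = euclid_dist w v"
proof -
  have "L2_set (\<lambda>j. euclid_dist (x[i := w] ! j) (x[i := v] ! j)) {..<q}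
      = L2_set (\<lambda>j. if j = i then euclid_dist w v else 0) {..<q}"
    using assms by (intro L2_set_cong) (auto simp: nth_list_update euclid_dist_self)
  also have "\<dots> = euclid_dist w v"
    using assms(2) unfolding L2_set_def by (simp add: euclid_dist_nonneg if_distrib[of "\<lambda>t. t\<^sup>2"] cong: if_cong)
  finally show ?thesis unfolding prod_dist_eq_L2_set .
qed

definition factor_proj :: "nat \<Rightarrow> real list list \<Rightarrow> (real list list \<Rightarrow> real list list set)
    \<Rightarrow> real list \<Rightarrow> real list set" where
  "factor_proj i x\<^sub>0 P' w = {u ! i | u. u \<in> P' (x\<^sub>0[i := w])}"

context
  fixes q N S i x\<^sub>0 P'
  assumes i: "i < q"
    and x\<^sub>0: "x\<^sub>0 \<in> prod_set q N S"
    and P': "gen_proj (prod_space q N) (prod_set q N S) P'"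
begin

lemma factor_proj_gen_proj: "gen_proj (rn (N i)) (S i) (factor_proj i x\<^sub>0 P')"
  unfolding gen_proj_def
proof (intro ballI conjI)
  fix w assume "w \<in> rn (N i)"
  then have "x\<^sub>0[i := w] \<in> prod_space q N"
    using x\<^sub>0 by (simp add: list_update_in_prod_space prod_set_def)
  then have "P' (x\<^sub>0[i := w]) \<noteq> {}" "P' (x\<^sub>0[i := w]) \<subseteq> prod_set q N S"
    using P' unfolding gen_proj_def by auto
  then show "factor_proj i x\<^sub>0 P' w \<noteq> {}" "factor_proj i x\<^sub>0 P' w \<subseteq> S i"
    unfolding factor_proj_def prod_set_def using i by auto
qed

lemma factor_proj_restricted_lipschitz:
  assumes "S i \<subseteq> rn (N i)"
    and "restricted_lipschitz (prod_space q N) (prod_dist q) (prod_set q N S) P' b"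
  shows "restricted_lipschitz (rn (N i)) euclid_dist (S i) (factor_proj i x\<^sub>0 P') b"
  unfolding restricted_lipschitz_def
proof (intro ballI)
  fix w x v assume w: "w \<in> rn (N i)" and x: "x \<in> S i" and "v \<in> factor_proj i x\<^sub>0 P' w"
  then obtain u where u: "u \<in> P' (x\<^sub>0[i := w])" and v: "v = u ! i"
    unfolding factor_proj_def by auto
  have len: "length x\<^sub>0 = q"
    using x\<^sub>0 by (simp add: prod_set_def prod_space_def)
  have "x\<^sub>0[i := w] \<in> prod_space q N" "x\<^sub>0[i := x] \<in> prod_set q N S"
    using x\<^sub>0 w x assms(1) list_update_in_prod_set
    by (auto simp: list_update_in_prod_space prod_set_def)
  then have "prod_dist q u (x\<^sub>0[i := x]) \<le> b * euclid_dist w x"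
    using assms(2) u i len prod_dist_list_update[OF len i, of w x]
    unfolding restricted_lipschitz_def by force
  moreover have "euclid_dist v x \<le> prod_dist q u (x\<^sub>0[i := x])"
    using member_le_L2_set[of "{..<q}" i "\<lambda>j. euclid_dist (u ! j) (x\<^sub>0[i := x] ! j)"] i len
    by (simp add: v prod_dist_eq_L2_set)
  ultimately show "euclid_dist v x \<le> b * euclid_dist w x" by linarith
qed

end

theorem corollary1:
  fixes q :: nat and N :: "nat \<Rightarrow> nat"
    and S :: "nat \<Rightarrow> real list set"
    and P :: "nat \<Rightarrow> real list \<Rightarrow> real list set"
  assumes "q \<ge> 2"
    and "\<And>i. i < q \<Longrightarrow> S i \<subseteq> rn (N i) \<and> S i \<noteq> {}"
    and "\<And>i. i < q \<Longrightarrow> gen_proj (rn (N i)) (S i) (P i)"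
    and "\<And>i P'. i < q \<Longrightarrow> gen_proj (rn (N i)) (S i) P' \<Longrightarrow>
           beta_const (rn (N i)) euclid_dist (S i) (P i)
             \<le> beta_const (rn (N i)) euclid_dist (S i) P'"
    and "\<And>i. i < q \<Longrightarrow> beta_const (rn (N i)) euclid_dist (S i) (P i) < \<infinity>"
  shows "gen_proj (prod_space q N) (prod_set q N S) (prod_proj q P) \<and>
         (\<forall>P'. gen_proj (prod_space q N) (prod_set q N S) P' \<longrightarrow>
            beta_const (prod_space q N) (prod_dist q) (prod_set q N S) (prod_proj q P)
              \<le> beta_const (prod_space q N) (prod_dist q) (prod_set q N S) P')"
proof (intro conjI allI impI)
  show "gen_proj (prod_space q N) (prod_set q N S) (prod_proj q P)"
    using assms(2,3) by (intro prod_proj_gen_proj) auto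
  obtain x\<^sub>0 where x\<^sub>0: "x\<^sub>0 \<in> prod_set q N S"
    using ex_list_nth_mem[of q S] assms(2) unfolding prod_set_def prod_space_def by blast
  fix P' assume P': "gen_proj (prod_space q N) (prod_set q N S) P'"
  show "beta_const (prod_space q N) (prod_dist q) (prod_set q N S) (prod_proj q P)
      \<le> beta_const (prod_space q N) (prod_dist q) (prod_set q N S) P'"
  proof (rule beta_const_leI, rule prod_proj_restricted_lipschitz)
    fix b c i
    assume b: "restricted_lipschitz (prod_space q N) (prod_dist q) (prod_set q N S) P' b"
      and "b < c" and i: "i < q"
    have "beta_const (rn (N i)) euclid_dist (S i) (P i)
        \<le> beta_const (rn (N i)) euclid_dist (S i) (factor_proj i x\<^sub>0 P')"
      using assms(4) i factor_proj_gen_proj[OF i x\<^sub>0 P'] by blast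
    also have "\<dots> \<le> ereal b"
      using factor_proj_restricted_lipschitz[OF i x\<^sub>0 P'] assms(2)[OF i] b
      by (intro beta_const_le_ereal) blast
    also have "\<dots> < ereal c" using \<open>b < c\<close> by simp
    finally show "restricted_lipschitz (rn (N i)) euclid_dist (S i) (P i) c"
      using euclid_dist_nonneg by (rule restricted_lipschitz_if_beta_const_less)
  qed
qed

end
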